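(* For every fixed positive integer $n_0$, all sufficiently large superabundant numbers are multiples of $n_0$; that is, only finitely many superabundant numbers are not divisible by $n_0$.
   Context: For a positive integer $n$, $\sigma(n)=\sum_{d\mid n} d$. A positive integer $s$ is superabundant if $\sigma(n)/n<\sigma(s)/s$ for all integers $0<n<s$. *)

theory Defs
  imports Complex_Main "HOL-Computational_Algebra.Primes"
begin

definition sigma :: "nat \<Rightarrow> nat" where
  "sigma n = (\<Sum>d | d dvd n. d)"

definition superabundant :: "nat \<Rightarrow> bool" where
  "superabundant s \<longleftrightarrow> s > 0 \<and>
     (\<forall>n. 0 < n \<and> n < s \<longrightarrow> real (sigma n) / real n < real (sigma s) / real s)"

end

theory Submission
  imports Defs
begin

(*
  Let s be superabundant with p-adic valuation a = v_p(s) < k for some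
  prime p, and let r be any other prime with r^e exactly dividing s.  If r^e were large
  compared with p^k, choose i with r^i \<le> p < r^(i+1) and exchange: s' = s * p / r^(i+1)
  is a smaller positive integer, and comparing the multiplicative factors of sigma(n)/n at p
  and r shows sigma(s')/s' \<ge> sigma(s)/s, contradicting superabundance.  Hence every prime
  power exactly dividing s is below B = 2 p^(k+2), so s has fewer than B prime factors
  and s \<le> B^B.  If n0 does not divide s, some prime p has v_p(s) < v_p(n0); so every
  such superabundant s is bounded in terms of n0, and there are only finitely many.
*)

text \<open>sigma is multiplicative: divisors of m*n are exactly the products of divisors of
  m and of n, uniquely so when m and n are coprime.\<close>
lemma sigma_mult:
  fixes m n :: nat
  assumes "coprime m n" "m > 0" "n > 0"
  shows "sigma (m * n) = sigma m * sigma n"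
proof -
  let ?A = "{d. d dvd m}" and ?B = "{d. d dvd n}" and ?prod = "\<lambda>x. fst x * snd x"
  have inj: "inj_on ?prod (?A \<times> ?B)"
  proof (rule inj_onI, clarsimp)
    fix a b a' b' assume h: "a dvd m" "b dvd n" "a' dvd m" "b' dvd n" "a * b = a' * b'"
    have "coprime a b'" "coprime a' b"
      using coprime_divisors[OF _ _ assms(1)] h by auto
    moreover have "a dvd a' * b'" "a' dvd a * b" using h(5) by (metis dvd_triv_left)+
    ultimately have "a = a'" by (simp add: coprime_dvd_mult_left_iff dvd_antisym)
    moreover have "a \<noteq> 0" using h(1) assms(2) by auto
    ultimately show "a = a' \<and> b = b'" using h(5) by simp
  qed
  have img: "?prod ` (?A \<times> ?B) = {d. d dvd m * n}"
  proof (rule set_eqI, rule iffI)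
    fix d assume "d \<in> {d. d dvd m * n}"
    then obtain a b where "d = a * b" "a dvd m" "b dvd n" using division_decomp by blast
    then show "d \<in> ?prod ` (?A \<times> ?B)" by force
  qed (auto intro: mult_dvd_mono)
  have "sigma m * sigma n = (\<Sum>x\<in>?A \<times> ?B. ?prod x)"
    unfolding sigma_def by (simp add: sum_product sum.cartesian_product case_prod_beta)
  also have "\<dots> = (\<Sum>d\<in>?prod ` (?A \<times> ?B). d)"
    using sum.reindex[OF inj, of "\<lambda>d. d"] by simp
  finally show ?thesis unfolding sigma_def img by simp
qed

lemma sigma_prime_power:
  fixes p :: nat
  assumes "prime p"
  shows "sigma (p ^ a) = (\<Sum>i\<le>a. p ^ i)"
proof -
  have "{d. d dvd p ^ a} = (\<lambda>i. p ^ i) ` {..a}"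
    using divides_primepow_nat[OF assms] by auto
  moreover have "inj_on (\<lambda>i. p ^ i) {..a}"
    using prime_gt_1_nat[OF assms] by (simp add: inj_on_def)
  ultimately show ?thesis unfolding sigma_def by (simp add: sum.reindex)
qed

lemma two_prime_decomposition:
  fixes p r s :: nat
  assumes "prime p" "prime r" "p \<noteq> r" "s > 0"
  obtains m where "s = p ^ multiplicity p s * r ^ multiplicity r s * m"
    "coprime p m" "coprime r m" "m > 0"
proof -
  define e where "e = multiplicity r s"
  have nu: "\<not> is_unit p" "\<not> is_unit r" using assms(1,2) by (auto simp: not_prime_unit)
  obtain y where y: "s = r ^ e * y" "\<not> r dvd y"
    using multiplicity_decompose'[OF _ nu(2), of s] assms(4) unfolding e_def by blast
  have "y \<noteq> 0" using y(1) assms(4) by (metis mult_0_right less_irrefl)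
  then obtain m where m: "y = p ^ multiplicity p y * m" "\<not> p dvd m"
    using multiplicity_decompose'[OF _ nu(1)] by blast
  have "\<not> p dvd r ^ e"
    using assms(1-3) by (metis prime_dvd_power_nat primes_dvd_imp_eq)
  hence "\<not> p dvd r ^ e * m" using m(2) assms(1) by (simp add: prime_dvd_mult_iff)
  moreover have s_eq: "s = p ^ multiplicity p y * (r ^ e * m)"
    using y m by (simp add: algebra_simps)
  ultimately have "multiplicity p s = multiplicity p y"
    using assms(1) by (intro multiplicity_decomposeI) auto
  hence "s = p ^ multiplicity p s * r ^ e * m"
    using s_eq by (simp add: mult.assoc)
  moreover have "\<not> r dvd m" using y(2) m(1) by (metis dvd_mult)
  moreover have "m > 0" using \<open>y \<noteq> 0\<close> m(1) by (auto intro: gr0I)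
  ultimately show ?thesis
    using that m(2) assms(1,2) unfolding e_def by (simp add: prime_imp_coprime)
qed

lemma sigma_two_prime_powers:
  fixes p r m :: nat
  assumes "prime p" "prime r" "p \<noteq> r" "coprime p m" "coprime r m" "m > 0"
  shows "sigma (p ^ b * r ^ c * m) = (\<Sum>i\<le>b. p ^ i) * (\<Sum>i\<le>c. r ^ i) * sigma m"
proof -
  have pos: "p ^ b > 0" "r ^ c > 0" using assms(1,2) by (auto dest: prime_gt_0_nat)
  have "coprime (p ^ b) (r ^ c)" using primes_coprime[OF assms(1-3)] by simp
  moreover have "coprime (p ^ b * r ^ c) m" using assms(4,5) by simp
  ultimately show ?thesis
    using sigma_mult pos assms(6) sigma_prime_power[OF assms(1)] sigma_prime_power[OF assms(2)]
    by simp
qed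

lemma superabundant_compare:
  assumes "superabundant s" "0 < n" "n < s"
  shows "sigma n * s < sigma s * n"
proof -
  have "real (sigma n) / real n < real (sigma s) / real s"
    using assms unfolding superabundant_def by blast
  hence "real (sigma n) * real s < real (sigma s) * real n"
    using assms(2,3) by (simp add: field_simps)
  then show ?thesis by (simp flip: of_nat_mult)
qed

lemma geometric_sum_split:
  "(\<Sum>i<m + n. (t::nat) ^ i) = (\<Sum>i<m. t ^ i) + t ^ m * (\<Sum>i<n. t ^ i)"
  by (induction n) (auto simp: power_add algebra_simps)

lemma geometric_sum_le:
  assumes "(t::nat) \<ge> 2"
  shows "(\<Sum>i\<le>n. t ^ i) \<le> 2 * t ^ n"
proof (induction n)
  case (Suc n)
  have "(\<Sum>i\<le>Suc n. t ^ i) \<le> 2 * t ^ n + t ^ Suc n" using Suc by simp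
  also have "2 * t ^ n \<le> t ^ Suc n" using assms by simp
  finally show ?case by simp
qed simp

lemma power_bracket:
  fixes r p e :: nat
  assumes "p \<ge> 1" "p < r ^ e"
  shows "\<exists>i. i < e \<and> r ^ i \<le> p \<and> p < r ^ Suc i"
  using assms(2)
proof (induction e)
  case (Suc e)
  show ?case
  proof (cases "p < r ^ e")
    case True
    then show ?thesis using Suc.IH less_SucI by blast
  next
    case False
    then show ?thesis using Suc.prems by auto
  qed
qed (use assms(1) in simp)

text \<open>Replacing r^(i+1) by p in s = p^a r^e m changes sigma(s)/s by the factor
  [P(a+1) R(e-i-1) r^(i+1)] / [p P(a) R(e)], P and R the geometric sums at p and r.\<close>
lemma exchange_inequality:
  fixes p r a e i k :: nat
  assumes p2: "p \<ge> 2" and r2: "r \<ge> 2" and ie: "i < e" and rp: "r ^ i \<le> p"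
    and ak: "a < k" and big: "2 * p ^ (k + 2) \<le> r ^ e"
  shows "p * (\<Sum>l\<le>a. p ^ l) * (\<Sum>l\<le>e. r ^ l)
           \<le> (\<Sum>l\<le>Suc a. p ^ l) * (\<Sum>l\<le>e - Suc i. r ^ l) * r ^ Suc i"
proof -
  define P where "P = (\<Sum>l\<le>a. p ^ l)"
  define R where "R = (\<Sum>l\<le>e - Suc i. r ^ l)"
  define T where "T = (\<Sum>l<Suc i. r ^ l)"
  have R_e: "(\<Sum>l\<le>e. r ^ l) = T + r ^ Suc i * R"
    using geometric_sum_split[where m = "Suc i" and n = "Suc (e - Suc i)" and t = r] ie
    unfolding T_def R_def lessThan_Suc_atMost[symmetric] by simp
  have P_Suc: "(\<Sum>l\<le>Suc a. p ^ l) = 1 + p * P"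
    using geometric_sum_split[where m = 1 and n = "Suc a" and t = p]
    unfolding P_def lessThan_Suc_atMost[symmetric] by simp
  have "r ^ e = r ^ (e - Suc i) * r ^ Suc i" using ie by (metis Suc_leI le_add_diff_inverse2 power_add)
  also have "\<dots> \<le> R * r ^ Suc i" unfolding R_def by (simp add: member_le_sum)
  finally have R_big: "r ^ e \<le> R * r ^ Suc i" .
  have "T \<le> 2 * r ^ i"
    using geometric_sum_le[OF r2] unfolding T_def lessThan_Suc_atMost by simp
  hence "p * P * T \<le> p * (2 * p ^ a) * (2 * p)"
    using rp geometric_sum_le[OF p2, of a] unfolding P_def by (intro mult_le_mono) auto
  also have "\<dots> = 2 * (2 * p ^ (a + 2))" by (simp add: power_add power2_eq_square)
  also have "2 * p ^ (a + 2) \<le> p ^ (a + 3)" using p2 by (simp add: numeral_3_eq_3)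
  also have "p ^ (a + 3) \<le> p ^ (k + 2)" using ak p2 by (intro power_increasing) auto
  finally have "p * P * T \<le> R * r ^ Suc i" using big R_big by linarith
  hence "p * P * (T + r ^ Suc i * R) \<le> (1 + p * P) * R * r ^ Suc i"
    by (simp add: algebra_simps)
  then show ?thesis using R_e P_Suc unfolding P_def R_def by simp
qed

text \<open>If v_p(s) < k for a superabundant s, every other prime power exactly dividing s
  is below 2 p^(k+2); otherwise the exchange of the previous section yields a smaller
  number with at least the same abundancy.\<close>
lemma superabundant_prime_power_bound:
  fixes s p r k :: nat
  assumes SA: "superabundant s" and p: "prime p" and ak: "multiplicity p s < k"
    and r: "prime r" and rp: "r \<noteq> p"
  shows "r ^ multiplicity r s < 2 * p ^ (k + 2)"
proof (rule ccontr)
  define a where "a = multiplicity p s"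
  define e where "e = multiplicity r s"
  assume "\<not> ?thesis"
  hence big: "2 * p ^ (k + 2) \<le> r ^ e" unfolding e_def by simp
  have s0: "s > 0" using SA unfolding superabundant_def by simp
  have p2: "p \<ge> 2" and r2: "r \<ge> 2" using p r prime_ge_2_nat by auto
  obtain m where s_eq: "s = p ^ a * r ^ e * m" and m: "coprime p m" "coprime r m" "m > 0"
    using two_prime_decomposition[OF p r rp[symmetric] s0] unfolding a_def e_def by blast
  have "p \<le> p ^ (k + 2)" using p2 by (simp add: self_le_power)
  hence "p < r ^ e" using big p2 by linarith
  then obtain i where ie: "i < e" and rp_i: "r ^ i \<le> p" and p_ri: "p < r ^ Suc i"
    using power_bracket[of p r e] p2 by auto
  define s' where "s' = p ^ Suc a * r ^ (e - Suc i) * m"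
  have ri_e: "r ^ e = r ^ Suc i * r ^ (e - Suc i)" using ie by (metis Suc_leI le_add_diff_inverse power_add)
  have "s' * r ^ Suc i = p * s" unfolding s'_def s_eq ri_e by (simp add: algebra_simps)
  hence "s' < s" using p_ri s0 by (metis mult.commute mult_less_cancel1 mult_less_mono2)
  moreover have "s' > 0" unfolding s'_def using m p2 r2 by simp
  ultimately have lt: "sigma s' * s < sigma s * s'" using superabundant_compare[OF SA] by blast
  have sig: "sigma (p ^ b * r ^ c * m) = (\<Sum>l\<le>b. p ^ l) * (\<Sum>l\<le>c. r ^ l) * sigma m" for b c
    using sigma_two_prime_powers[OF p r rp[symmetric] m] .
  have "sigma s * s' = (p * (\<Sum>l\<le>a. p ^ l) * (\<Sum>l\<le>e. r ^ l)) * (p ^ a * r ^ (e - Suc i) * sigma m * m)"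
    unfolding s'_def s_eq sig by (simp add: algebra_simps)
  also have "\<dots> \<le> ((\<Sum>l\<le>Suc a. p ^ l) * (\<Sum>l\<le>e - Suc i. r ^ l) * r ^ Suc i)
                     * (p ^ a * r ^ (e - Suc i) * sigma m * m)"
    using exchange_inequality[OF p2 r2 ie rp_i _ big] ak unfolding a_def
    by (intro mult_right_mono) auto
  also have "\<dots> = sigma s' * s" unfolding s'_def s_eq sig ri_e by (simp add: algebra_simps)
  finally show False using lt by simp
qed

text \<open>A positive integer all of whose exact prime-power divisors are below B has at most
  B prime factors, hence is at most B^B.\<close>
lemma bounded_prime_powers_imp_bounded:
  fixes s B :: nat
  assumes "s > 0" and small: "\<And>q. q \<in> prime_factors s \<Longrightarrow> q ^ multiplicity q s < B"
  shows "s \<le> B ^ B"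
proof -
  have factorization: "s = (\<Prod>q\<in>prime_factors s. q ^ multiplicity q s)"
    by (rule prime_factorization_nat[OF assms(1)])
  show ?thesis
  proof (cases "prime_factors s = {}")
    case True
    have "s = 1" by (subst factorization) (simp add: True)
    then show ?thesis using one_le_power[of B B] by (cases "B = 0") auto
  next
    case False
    have "prime_factors s \<subseteq> {..<B}"
    proof
      fix q assume q: "q \<in> prime_factors s"
      have "multiplicity q s \<ge> 1" using q assms(1) by (simp add: prime_factors_multiplicity)
      moreover have "q > 0" using q by (auto intro: prime_gt_0_nat)
      ultimately have "q ^ 1 \<le> q ^ multiplicity q s" by (intro power_increasing) auto
      then show "q \<in> {..<B}" using small[OF q] by simp
    qed
    hence "card (prime_factors s) \<le> card {..<B}" by (intro card_mono) auto
    moreover obtain q where "q \<in> prime_factors s" using False by blast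
    hence "B \<ge> 1" using small by fastforce
    ultimately have "(\<Prod>q\<in>prime_factors s. q ^ multiplicity q s) \<le> B ^ B"
      by (intro prod_le_power) (simp_all add: less_imp_le small)
    then show ?thesis using factorization by linarith
  qed
qed

lemma superabundant_bound:
  fixes s p k :: nat
  assumes SA: "superabundant s" and p: "prime p" and ak: "multiplicity p s < k"
  shows "s \<le> (2 * p ^ (k + 2)) ^ (2 * p ^ (k + 2))"
proof (rule bounded_prime_powers_imp_bounded)
  show "s > 0" using SA unfolding superabundant_def by simp
  fix q assume q: "q \<in> prime_factors s"
  show "q ^ multiplicity q s < 2 * p ^ (k + 2)"
  proof (cases "q = p")
    case True
    have "p ^ multiplicity p s < p ^ k" using ak prime_gt_1_nat[OF p] by simp
    also have "\<dots> \<le> p ^ (k + 2)" using prime_gt_0_nat[OF p] by (intro power_increasing) auto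
    finally have "p ^ multiplicity p s < 2 * p ^ (k + 2)" by linarith
    then show ?thesis using True by simp
  next
    case False
    show ?thesis using superabundant_prime_power_bound[OF SA p ak _ False] q by auto
  qed
qed

lemma not_dvd_imp_smaller_multiplicity:
  fixes n0 s :: nat
  assumes "n0 > 0" "\<not> n0 dvd s"
  obtains p where "p \<in> prime_factors n0" "multiplicity p s < multiplicity p n0"
proof -
  have "\<not> (\<forall>p. prime p \<longrightarrow> multiplicity p n0 \<le> multiplicity p s)"
    using assms multiplicity_le_imp_dvd[of n0 s] by auto
  then obtain p where p: "prime p" "multiplicity p s < multiplicity p n0"
    by (auto simp: not_le)
  hence "p dvd n0" using not_dvd_imp_multiplicity_0[of p n0] by (cases "p dvd n0") auto
  hence "p \<in> prime_factors n0" using p(1) assms(1) by (simp add: in_prime_factors_iff)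
  then show ?thesis using that p(2) by blast
qed

theorem proposition1:
  fixes n0 :: nat
  assumes "n0 > 0"
  shows "finite {s. superabundant s \<and> \<not> n0 dvd s}"
proof (rule finite_subset)
  define B where "B p = 2 * p ^ (multiplicity p n0 + 2)" for p :: nat
  show "{s. superabundant s \<and> \<not> n0 dvd s} \<subseteq> (\<Union>p\<in>prime_factors n0. {..B p ^ B p})"
  proof clarify
    fix s assume SA: "superabundant s" and nd: "\<not> n0 dvd s"
    obtain p where p: "p \<in> prime_factors n0" and small: "multiplicity p s < multiplicity p n0"
      using not_dvd_imp_smaller_multiplicity[OF assms nd] .
    have "s \<le> B p ^ B p"
      using superabundant_bound[OF SA in_prime_factors_imp_prime[OF p] small] unfolding B_def .
    then show "s \<in> (\<Union>p\<in>prime_factors n0. {..B p ^ B p})" using p by blast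
  qed
qed simp

end
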